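(* Let $X$ be a compact metric space and $f\colon X\to X$ continuous. Suppose there is a full orbit $\bar x=(x_i)_{i\in\mathbb Z}$ (i.e. $f(x_i)=x_{i+1}$ for all $i\in\mathbb Z$) such that $x_0\notin\lambda(\bar x)$. Then $\mathrm{Per}(\bar x)=\mathbb N$, and consequently $\mathrm{Per}(2^f)=\mathbb N$.
   Context: $2^X$ is the space of nonempty closed subsets of $X$ with the Hausdorff metric, and $2^f(C)=f(C)$. A full orbit of $x$ is a sequence $\bar x=(x_i)_{i\in\mathbb Z}$ in $X$ with $x_0=x$ and $f(x_i)=x_{i+1}$ for all $i$. Its limit set is $\lambda(\bar x)=\alpha(\bar x)\cup\omega(\bar x)=\bigcap_{m\ge 0}\overline{\bigcup_{n\ge m}\{x_{-n},x_n\}}$. For a full orbit $\bar x$, $\mathrm{Per}(\bar x)$ is the set of $k\in\mathbb N$ such that $\overline{\{x_{mk}:m\in\mathbb Z\}}\in 2^X$ is a periodic point of $2^f$ with fundamental period $k$. $\mathrm{Per}(2^f)$ is the set of fundamental periods of periodic points of $2^f$. *)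

theory Defs
  imports "HOL-Analysis.Analysis"
begin

text \<open>The hyperspace 2^X: nonempty closed subsets of X.  (The Hausdorff metric
  plays no role for periodicity, which only concerns iteration of 2^f.)\<close>
definition hyperspace :: "'a::metric_space set \<Rightarrow> 'a set set" where
  "hyperspace X = {C. C \<noteq> {} \<and> closed C \<and> C \<subseteq> X}"

definition induced_map :: "('a \<Rightarrow> 'a) \<Rightarrow> 'a set \<Rightarrow> 'a set" where
  "induced_map f C = f ` C"

definition has_fund_period :: "('b \<Rightarrow> 'b) \<Rightarrow> 'b \<Rightarrow> nat \<Rightarrow> bool" where
  "has_fund_period g p k \<longleftrightarrow>
     0 < k \<and> (g ^^ k) p = p \<and> (\<forall>j. 0 < j \<and> j < k \<longrightarrow> (g ^^ j) p \<noteq> p)"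

definition full_orbit :: "'a set \<Rightarrow> ('a \<Rightarrow> 'a) \<Rightarrow> (int \<Rightarrow> 'a) \<Rightarrow> bool" where
  "full_orbit X f x \<longleftrightarrow> (\<forall>i. x i \<in> X \<and> f (x i) = x (i + 1))"

text \<open>Limit set lambda(x) = alpha(x) \<union> omega(x).\<close>
definition limit_set :: "(int \<Rightarrow> 'a::metric_space) \<Rightarrow> 'a set" where
  "limit_set x = (\<Inter>m::nat. closure (\<Union>n\<in>{m..}. {x (- int n), x (int n)}))"

definition orbit_Per :: "'a::metric_space set \<Rightarrow> ('a \<Rightarrow> 'a) \<Rightarrow> (int \<Rightarrow> 'a) \<Rightarrow> nat set" where
  "orbit_Per X f x = {k. 0 < k \<and>
      closure {x (m * int k) | m. True} \<in> hyperspace X \<and>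
      has_fund_period (induced_map f) (closure {x (m * int k) | m. True}) k}"

definition hyper_Per :: "'a::metric_space set \<Rightarrow> ('a \<Rightarrow> 'a) \<Rightarrow> nat set" where
  "hyper_Per X f = {k. \<exists>C\<in>hyperspace X. has_fund_period (induced_map f) C k}"

end

theory Submission
  imports Defs
begin

text \<open>
  Under 2^f the closure C of the sampled orbit {x(mk) | m \<in> \<int>} moves to the closure of
  {x(mk + j) | m \<in> \<int>}, because f commutes with closures of subsets of a compact space.
  For j = k this is C again.  For 0 < j < k the index 0 is avoided, and x_0 lies in the
  closure of no set of orbit points with nonzero indices: far indices stay away from x_0
  since x_0 is not in the limit set, and a near index i \<noteq> 0 with x_i = x_0 would make the
  orbit periodic, putting x_0 into its own limit set.  So x_0 distinguishes the j-th image
  from C.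
\<close>

lemma full_orbit_funpow:
  assumes "full_orbit X f x"
  shows "x (i + int n) = (f ^^ n) (x i)"
proof (induction n)
  case 0
  then show ?case by simp
next
  case (Suc n)
  have "x (i + int (Suc n)) = x ((i + int n) + 1)"
    by (simp add: algebra_simps)
  also have "\<dots> = f (x (i + int n))"
    using assms unfolding full_orbit_def by simp
  finally show ?case using Suc by simp
qed

lemma image_closure_eq_closure_image:
  fixes f :: "'a::metric_space \<Rightarrow> 'b::metric_space"
  assumes "compact (closure A)" and "continuous_on (closure A) f"
  shows "f ` closure A = closure (f ` A)"
proof
  show "f ` closure A \<subseteq> closure (f ` A)"
    using image_closure_subset[OF assms(2) closed_closure closure_subset] .
  have "closed (f ` closure A)"
    using compact_continuous_image[OF assms(2,1)] by (rule compact_imp_closed)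
  then show "closure (f ` A) \<subseteq> f ` closure A"
    by (intro closure_minimal image_mono closure_subset)
qed

lemma full_orbit_return_in_limit_set:
  fixes x :: "int \<Rightarrow> 'a::metric_space"
  assumes orbit: "full_orbit X f x" and return: "x i = x 0" "i \<noteq> 0"
  shows "x 0 \<in> limit_set x"
proof -
  define p where "p = nat \<bar>i\<bar>"
  have "p \<ge> 1" using return(2) by (simp add: p_def)
  have x_p: "x (int p) = x 0"
  proof (cases "i > 0")
    case True
    then show ?thesis using return(1) by (simp add: p_def)
  next
    case False
    then have "x 0 = (f ^^ p) (x i)"
      using full_orbit_funpow[OF orbit, of i p] by (simp add: p_def)
    also have "\<dots> = x (int p)"
      using full_orbit_funpow[OF orbit, of 0 p] return(1) by simp
    finally show ?thesis by simp
  qed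
  have x_multiple: "x (int (t * p)) = x 0" for t
  proof (induction t)
    case 0
    then show ?case by simp
  next
    case (Suc t)
    have "x (int (Suc t * p)) = x (int p + int (t * p))"
      by simp
    also have "\<dots> = (f ^^ (t * p)) (x 0)"
      unfolding full_orbit_funpow[OF orbit] x_p ..
    also have "\<dots> = x (int (t * p))"
      using full_orbit_funpow[OF orbit, of 0 "t * p"] by simp
    finally show ?case
      using Suc by simp
  qed
  show ?thesis
    unfolding limit_set_def
  proof
    fix m :: nat
    have "m * p \<in> {m..}"
      using \<open>p \<ge> 1\<close> by simp
    moreover have "x 0 \<in> {x (- int (m * p)), x (int (m * p))}"
      using x_multiple[of m] by simp
    ultimately have "x 0 \<in> (\<Union>n\<in>{m..}. {x (- int n), x (int n)})"
      by blast
    then show "x 0 \<in> closure (\<Union>n\<in>{m..}. {x (- int n), x (int n)})"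
      by (rule subsetD[OF closure_subset])
  qed
qed

lemma full_orbit_not_in_closure_away_from_zero:
  fixes x :: "int \<Rightarrow> 'a::metric_space"
  assumes orbit: "full_orbit X f x" and not_limit: "x 0 \<notin> limit_set x" and "0 \<notin> I"
  shows "x 0 \<notin> closure (x ` I)"
proof
  assume x0_closure: "x 0 \<in> closure (x ` I)"
  obtain m0 :: nat where "x 0 \<notin> closure (\<Union>n\<in>{m0..}. {x (- int n), x (int n)})"
    using not_limit unfolding limit_set_def by blast
  define Far where "Far = (\<Union>n\<in>{m0..}. {x (- int n), x (int n)})"
  have far: "x 0 \<notin> closure Far"
    unfolding Far_def by fact
  define Near where "Near = x ` {i. i \<noteq> 0 \<and> \<bar>i\<bar> < int m0}"
  have "finite Near"
    unfolding Near_def by (rule finite_imageI, rule finite_subset[of _ "{- int m0..int m0}"]) auto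
  have "x ` I \<subseteq> Far \<union> Near"
  proof
    fix y assume "y \<in> x ` I"
    then obtain i where "y = x i" "i \<in> I" by blast
    with \<open>0 \<notin> I\<close> have "i \<noteq> 0" by auto
    show "y \<in> Far \<union> Near"
    proof (cases "\<bar>i\<bar> < int m0")
      case True
      then show ?thesis using \<open>y = x i\<close> \<open>i \<noteq> 0\<close> by (auto simp: Near_def)
    next
      case False
      have "i = - int (nat \<bar>i\<bar>) \<or> i = int (nat \<bar>i\<bar>)" by linarith
      then have "y \<in> {x (- int (nat \<bar>i\<bar>)), x (int (nat \<bar>i\<bar>))}"
        using \<open>y = x i\<close> by auto
      moreover have "nat \<bar>i\<bar> \<in> {m0..}" using False by auto
      ultimately show ?thesis unfolding Far_def by blast
    qed
  qed
  then have "closure (x ` I) \<subseteq> closure Far \<union> Near"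
    using closure_mono closure_Un finite_imp_closed[OF \<open>finite Near\<close>] closure_closed
    by metis
  with x0_closure far have "x 0 \<in> Near" by blast
  then obtain i where "i \<noteq> 0" "x i = x 0" by (auto simp: Near_def)
  with full_orbit_return_in_limit_set[OF orbit] not_limit show False by blast
qed

lemma induced_map_funpow_closure_orbit:
  fixes x :: "int \<Rightarrow> 'a::metric_space"
  assumes "compact X" and "continuous_on X f" and orbit: "full_orbit X f x"
  shows "(induced_map f ^^ j) (closure (x ` I)) = closure (x ` (\<lambda>i. i + int j) ` I)"
proof (induction j)
  case 0
  then show ?case by simp
next
  case (Suc j)
  define A where "A = x ` (\<lambda>i. i + int j) ` I"
  have "closure A \<subseteq> X"
    using orbit compact_imp_closed[OF \<open>compact X\<close>] unfolding A_def full_orbit_def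
    by (intro closure_minimal) auto
  then have "compact (closure A)"
    using compact_Int_closed[OF \<open>compact X\<close> closed_closure, of A] by (simp add: Int_absorb1)
  then have "f ` closure A = closure (f ` A)"
    using continuous_on_subset[OF \<open>continuous_on X f\<close> \<open>closure A \<subseteq> X\<close>]
    by (rule image_closure_eq_closure_image)
  moreover have "f (x i) = x (i + 1)" for i
    using orbit unfolding full_orbit_def by auto
  then have "f ` A = x ` (\<lambda>i. i + int (Suc j)) ` I"
    unfolding A_def by (simp add: image_image ac_simps)
  ultimately show ?case using Suc by (simp add: induced_map_def A_def)
qed

lemma closure_full_orbit_in_hyperspace:
  fixes x :: "int \<Rightarrow> 'a::metric_space"
  assumes "compact X" and "full_orbit X f x" and "I \<noteq> {}"
  shows "closure (x ` I) \<in> hyperspace X"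
proof -
  have "x ` I \<subseteq> X"
    using assms(2) unfolding full_orbit_def by blast
  then have "closure (x ` I) \<subseteq> X"
    using compact_imp_closed[OF assms(1)] by (rule closure_minimal)
  with assms(3) show ?thesis
    unfolding hyperspace_def by simp
qed

lemma full_orbit_multiples_fund_period:
  fixes x :: "int \<Rightarrow> 'a::metric_space"
  assumes "compact X" and "continuous_on X f" and orbit: "full_orbit X f x"
    and not_limit: "x 0 \<notin> limit_set x" and "0 < k"
  shows "has_fund_period (induced_map f) (closure (x ` range (\<lambda>m. m * int k))) k"
proof -
  let ?M = "range (\<lambda>m. m * int k)"
  have iter: "(induced_map f ^^ j) (closure (x ` ?M)) = closure (x ` (\<lambda>i. i + int j) ` ?M)" for j
    using induced_map_funpow_closure_orbit[OF assms(1-3)] .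
  have "(\<lambda>i. i + int k) ` ?M = range ((\<lambda>m. m * int k) \<circ> (\<lambda>m. m + 1))"
    by (simp add: image_image o_def distrib_right)
  also have "\<dots> = ?M"
    by (simp only: image_comp[symmetric] surj_plus_right)
  finally have "(\<lambda>i. i + int k) ` ?M = ?M" .
  then have returns: "(induced_map f ^^ k) (closure (x ` ?M)) = closure (x ` ?M)"
    using iter by simp
  have "(induced_map f ^^ j) (closure (x ` ?M)) \<noteq> closure (x ` ?M)" if "0 < j" "j < k" for j
  proof -
    have "0 \<notin> (\<lambda>i. i + int j) ` ?M"
    proof
      assume "0 \<in> (\<lambda>i. i + int j) ` ?M"
      then obtain m where "m * int k + int j = 0" by auto
      then have "int k dvd int j"
        by (metis add.commute add_eq_0_iff dvd_minus_iff dvd_triv_right)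
      with that show False by (simp add: nat_dvd_not_less)
    qed
    then have "x 0 \<notin> (induced_map f ^^ j) (closure (x ` ?M))"
      using iter full_orbit_not_in_closure_away_from_zero[OF orbit not_limit] by simp
    moreover have "x 0 \<in> x ` ?M"
      using rangeI[of "\<lambda>m. m * int k" 0] by (rule rev_image_eqI) simp
    then have "x 0 \<in> closure (x ` ?M)"
      by (rule subsetD[OF closure_subset])
    ultimately show ?thesis by blast
  qed
  with returns \<open>0 < k\<close> show ?thesis unfolding has_fund_period_def by blast
qed

theorem proposition4p2:
  fixes X :: "'a::metric_space set" and f :: "'a \<Rightarrow> 'a" and x :: "int \<Rightarrow> 'a"
  assumes "compact X"
    and "continuous_on X f" and "f ` X \<subseteq> X"
    and "full_orbit X f x"
    and "x 0 \<notin> limit_set x"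
  shows "orbit_Per X f x = {k. 1 \<le> k} \<and> hyper_Per X f = {k. 1 \<le> k}"
proof -
  have sample_eq: "{x (m * int k) | m. True} = x ` range (\<lambda>m. m * int k)" for k
    by blast
  have periodic: "closure {x (m * int k) | m. True} \<in> hyperspace X \<and>
      has_fund_period (induced_map f) (closure {x (m * int k) | m. True}) k" if "1 \<le> k" for k
    unfolding sample_eq using that
    by (simp add: closure_full_orbit_in_hyperspace[OF assms(1,4)]
        full_orbit_multiples_fund_period[OF assms(1,2,4,5)])
  have "orbit_Per X f x = {k. 1 \<le> k}"
    using periodic by (auto simp: orbit_Per_def)
  moreover have "hyper_Per X f = {k. 1 \<le> k}"
  proof (intro set_eqI iffI)
    fix k :: nat
    assume "k \<in> hyper_Per X f"
    then show "k \<in> {k. 1 \<le> k}"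
      by (auto simp: hyper_Per_def has_fund_period_def)
  next
    fix k :: nat
    assume "k \<in> {k. 1 \<le> k}"
    then show "k \<in> hyper_Per X f"
      using periodic unfolding hyper_Per_def by blast
  qed
  ultimately show ?thesis ..
qed

end
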